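(* For quantum states $\rho,\sigma\in\mathbb{C}^{d\times d}$, $D_{KL}(\rho\|\sigma) \le \bigl(2 + D_\infty(\rho\|\sigma)\bigr)\cdot D_H^2(\rho\|\sigma)$.
   Context: $D_{KL}(\rho\|\sigma) = \mathrm{tr}(\rho(\ln\rho-\ln\sigma))$. The quantum Hellinger distance squared is $D_H^2(\rho\|\sigma) = \mathrm{tr}((\sqrt\rho - \sqrt\sigma)^2) = 2(1 - \mathrm{tr}(\sqrt\rho\sqrt\sigma))$. With spectral decompositions $\rho = \sum_i p_i|\varphi_i\rangle\langle\varphi_i|$, $\sigma = \sum_j q_j|\psi_j\rangle\langle\psi_j|$, the conventional quantum $\infty$-Rényi divergence is $D_\infty(\rho\|\sigma) = \max\{\ln(p_i/q_j) : p_i|\langle\varphi_i|\psi_j\rangle|^2 \ne 0\}$ (equal to $+\infty$ if some such pair has $q_j = 0$); it is the $\alpha\to\infty$ case of $D_\alpha(\rho\|\sigma) = \frac{1}{\alpha-1}\ln\mathrm{tr}(\rho^\alpha\sigma^{1-\alpha})$. *)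

theory Defs
  imports "Jordan_Normal_Form.Matrix" "HOL-Library.Extended_Real"
begin

definition mtrace :: "complex mat \<Rightarrow> complex" where
  "mtrace A = (\<Sum>i<dim_row A. A $$ (i,i))"

definition cadj :: "complex mat \<Rightarrow> complex mat" where
  "cadj A = mat (dim_col A) (dim_row A) (\<lambda>(i,j). cnj (A $$ (j,i)))"

definition hermitian_mat :: "nat \<Rightarrow> complex mat \<Rightarrow> bool" where
  "hermitian_mat d A \<longleftrightarrow> A \<in> carrier_mat d d \<and> cadj A = A"

definition unitary_mat :: "nat \<Rightarrow> complex mat \<Rightarrow> bool" where
  "unitary_mat d U \<longleftrightarrow> U \<in> carrier_mat d d \<and> U * cadj U = 1\<^sub>m d \<and> cadj U * U = 1\<^sub>m d"

definition psd_mat :: "nat \<Rightarrow> complex mat \<Rightarrow> bool" where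
  "psd_mat d A \<longleftrightarrow> hermitian_mat d A \<and>
     (\<forall>v \<in> carrier_vec d. Re (\<Sum>i<d. cnj (v $ i) * (A *\<^sub>v v) $ i) \<ge> 0)"

definition density_mat :: "nat \<Rightarrow> complex mat \<Rightarrow> bool" where
  "density_mat d A \<longleftrightarrow> psd_mat d A \<and> mtrace A = 1"

definition rdiag :: "nat \<Rightarrow> (nat \<Rightarrow> real) \<Rightarrow> complex mat" where
  "rdiag d l = mat d d (\<lambda>(i,j). if i = j then complex_of_real (l i) else 0)"

definition spec_dec :: "nat \<Rightarrow> complex mat \<Rightarrow> complex mat \<Rightarrow> (nat \<Rightarrow> real) \<Rightarrow> bool" where
  "spec_dec d A U l \<longleftrightarrow> unitary_mat d U \<and> A = U * rdiag d l * cadj U"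

definition mat_fun :: "(real \<Rightarrow> real) \<Rightarrow> complex mat \<Rightarrow> complex mat" where
  "mat_fun f A = (let d = dim_row A in
     (SOME B. \<exists>U l. spec_dec d A U l \<and> B = U * rdiag d (f \<circ> l) * cadj U))"

text \<open>Umegaki relative entropy D_KL = tr(rho (ln rho - ln sigma)); it is +infinity
  unless supp rho is contained in supp sigma. (Isabelle's ln 0 = 0 gives the
  usual convention 0 ln 0 = 0 and ln is applied only on the support.)\<close>
definition D_KL :: "complex mat \<Rightarrow> complex mat \<Rightarrow> ereal" where
  "D_KL \<rho> \<sigma> = (if (\<forall>v \<in> carrier_vec (dim_row \<sigma>). \<sigma> *\<^sub>v v = 0\<^sub>v (dim_row \<sigma>) \<longrightarrow> \<rho> *\<^sub>v v = 0\<^sub>v (dim_row \<rho>))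
     then ereal (Re (mtrace (\<rho> * (mat_fun ln \<rho> - mat_fun ln \<sigma>))))
     else \<infinity>)"

definition D_H2 :: "complex mat \<Rightarrow> complex mat \<Rightarrow> real" where
  "D_H2 \<rho> \<sigma> = Re (mtrace ((mat_fun sqrt \<rho> - mat_fun sqrt \<sigma>) * (mat_fun sqrt \<rho> - mat_fun sqrt \<sigma>)))"

text \<open>D_infinity computed from given spectral decompositions
  rho = sum_i p_i |phi_i><phi_i| (phi_i = i-th column of U),
  sigma = sum_j q_j |psi_j><psi_j| (psi_j = j-th column of V).\<close>
definition D_inf_dec :: "nat \<Rightarrow> complex mat \<Rightarrow> (nat \<Rightarrow> real) \<Rightarrow> complex mat \<Rightarrow> (nat \<Rightarrow> real) \<Rightarrow> ereal" where
  "D_inf_dec d U p V q = (let S = {(i,j). i < d \<and> j < d \<and>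
        p i * (cmod (\<Sum>k<d. cnj (U $$ (k,i)) * V $$ (k,j)))\<^sup>2 \<noteq> 0} in
     if \<exists>(i,j)\<in>S. q j = 0 then \<infinity>
     else Max ((\<lambda>(i,j). ereal (ln (p i / q j))) ` S))"

definition D_inf :: "complex mat \<Rightarrow> complex mat \<Rightarrow> ereal" where
  "D_inf \<rho> \<sigma> = (let d = dim_row \<rho> in
     (SOME r. \<exists>U p V q. spec_dec d \<rho> U p \<and> spec_dec d \<sigma> V q \<and> r = D_inf_dec d U p V q))"

end

theory Submission
  imports Defs "Jordan_Normal_Form.Schur_Decomposition" "HOL-Computational_Algebra.Fundamental_Theorem_Algebra"
begin

text \<open>Write rho = U diag(p) U^* and sigma = V diag(q) V^*, and let c i j be the squared modulus of
  the (i,j) entry of the unitary matrix U^* V, i.e. the squared overlap of the i-th eigenvector of rho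
  with the j-th eigenvector of sigma. Then c is doubly stochastic, and all three divergences become
  classical expressions weighted by c: D_KL is the sum of c i j p i (ln p i - ln q j), D_H^2 the sum
  of c i j (sqrt (p i) - sqrt (q j))^2, and D_infinity the maximum of ln (p i / q j) over the pairs
  with c i j p i > 0, which is nonnegative. Adding the vanishing sum of c i j (q j - p i) to D_KL,
  the claim follows termwise from p ln (p / q) - p + q <= (2 + M) (sqrt p - sqrt q)^2 whenever
  ln (p / q) <= M and M >= 0; with p = t^2 q this is 2 t^2 ln t - t^2 + 1 <= (2 + M) (t - 1)^2,
  an elementary inequality proved separately for t <= 1 and t >= 1.\<close>

section \<open>Conjugate transposes, real diagonal and unitary matrices\<close>

lemma cadj_dim [simp]: "dim_row (cadj A) = dim_col A" "dim_col (cadj A) = dim_row A"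
  by (auto simp: cadj_def)

lemma cadj_carrier_mat [simp]: "A \<in> carrier_mat n m \<Longrightarrow> cadj A \<in> carrier_mat m n"
  by (auto simp: cadj_def)

lemma index_cadj [simp]: "i < dim_col A \<Longrightarrow> j < dim_row A \<Longrightarrow> cadj A $$ (i,j) = cnj (A $$ (j,i))"
  by (auto simp: cadj_def)

lemma cadj_cadj [simp]: "cadj (cadj A) = A"
  by (rule eq_matI) auto

lemma index_mult_mat_sum:
  assumes "A \<in> carrier_mat n k" "B \<in> carrier_mat k m" "i < n" "j < m"
  shows "(A * B) $$ (i,j) = (\<Sum>l<k. A $$ (i,l) * B $$ (l,j))"
  using assms by (auto simp: scalar_prod_def lessThan_atLeast0 intro!: sum.cong)

lemma cadj_mult:
  assumes A: "A \<in> carrier_mat n k" and B: "B \<in> carrier_mat k m"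
  shows "cadj (A * B) = cadj B * cadj A"
proof (rule eq_matI)
  fix i j assume "i < dim_row (cadj B * cadj A)" "j < dim_col (cadj B * cadj A)"
  with A B have i: "i < m" and j: "j < n" by auto
  have "cadj (A * B) $$ (i,j) = cnj (\<Sum>l<k. A $$ (j,l) * B $$ (l,i))"
    using A B i j by (simp add: index_mult_mat_sum[OF A B j i])
  also have "\<dots> = (\<Sum>l<k. cadj B $$ (i,l) * cadj A $$ (l,j))"
    using A B i j by (auto simp: mult.commute intro!: sum.cong)
  also have "\<dots> = (cadj B * cadj A) $$ (i,j)"
    using A B i j by (intro index_mult_mat_sum[symmetric]) auto
  finally show "cadj (A * B) $$ (i,j) = (cadj B * cadj A) $$ (i,j)" .
qed (use A B in auto)

lemma rdiag_carrier_mat [simp]: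
  "rdiag n l \<in> carrier_mat n n" "dim_row (rdiag n l) = n" "dim_col (rdiag n l) = n"
  by (auto simp: rdiag_def)

lemma index_rdiag [simp]:
  "i < n \<Longrightarrow> j < n \<Longrightarrow> rdiag n l $$ (i,j) = (if i = j then complex_of_real (l i) else 0)"
  by (auto simp: rdiag_def)

lemma rdiag_conj_carrier_mat:
  "X \<in> carrier_mat n n \<Longrightarrow> X * rdiag n f * cadj X \<in> carrier_mat n n"
  by (metis cadj_carrier_mat mult_carrier_mat rdiag_carrier_mat(1))

lemma index_rdiag_mult:
  assumes "B \<in> carrier_mat n m" "i < n" "j < m"
  shows "(rdiag n a * B) $$ (i,j) = complex_of_real (a i) * B $$ (i,j)"
proof -
  have "(rdiag n a * B) $$ (i,j) = (\<Sum>k<n. rdiag n a $$ (i,k) * B $$ (k,j))"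
    using assms by (intro index_mult_mat_sum) auto
  also have "\<dots> = (\<Sum>k<n. if k = i then complex_of_real (a i) * B $$ (i,j) else 0)"
    using assms by (intro sum.cong) auto
  finally show ?thesis using assms by simp
qed

lemma index_mult_rdiag:
  assumes "B \<in> carrier_mat m n" "i < m" "j < n"
  shows "(B * rdiag n a) $$ (i,j) = B $$ (i,j) * complex_of_real (a j)"
proof -
  have "(B * rdiag n a) $$ (i,j) = (\<Sum>k<n. B $$ (i,k) * rdiag n a $$ (k,j))"
    using assms by (intro index_mult_mat_sum) auto
  also have "\<dots> = (\<Sum>k<n. if k = j then B $$ (i,j) * complex_of_real (a j) else 0)"
    using assms by (intro sum.cong) auto
  finally show ?thesis using assms by simp
qed

lemma index_mult_rdiag_mult:
  assumes X: "X \<in> carrier_mat n k" and Y: "Y \<in> carrier_mat k m" and i: "i < n" and j: "j < m"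
  shows "(X * rdiag k l * Y) $$ (i,j) = (\<Sum>t<k. X $$ (i,t) * complex_of_real (l t) * Y $$ (t,j))"
proof -
  have "(X * rdiag k l * Y) $$ (i,j) = (\<Sum>t<k. (X * rdiag k l) $$ (i,t) * Y $$ (t,j))"
    using X Y i j by (intro index_mult_mat_sum) auto
  also have "\<dots> = (\<Sum>t<k. X $$ (i,t) * complex_of_real (l t) * Y $$ (t,j))"
    using X i by (intro sum.cong) (auto simp del: index_mult_mat simp: index_mult_rdiag)
  finally show ?thesis .
qed

lemma index_rdiag_mult_vec:
  assumes "w \<in> carrier_vec n" "i < n"
  shows "(rdiag n l *\<^sub>v w) $ i = complex_of_real (l i) * w $ i"
proof -
  have "(rdiag n l *\<^sub>v w) $ i = (\<Sum>k\<in>{0..<n}. (if i = k then complex_of_real (l i) else 0) * w $ k)"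
    using assms by (auto simp: scalar_prod_def intro!: sum.cong)
  also have "\<dots> = (\<Sum>k\<in>{0..<n}. if k = i then complex_of_real (l i) * w $ i else 0)"
    by (intro sum.cong) auto
  finally show ?thesis using assms by simp
qed

lemma unitary_carrier_mat: "unitary_mat n U \<Longrightarrow> U \<in> carrier_mat n n"
  by (simp add: unitary_mat_def)

lemma unitaryI:
  assumes "U \<in> carrier_mat n n" "cadj U * U = 1\<^sub>m n"
  shows "unitary_mat n U"
  using assms mat_mult_left_right_inverse[of "cadj U" n U] unfolding unitary_mat_def by auto

lemma unitary_cadj: "unitary_mat n U \<Longrightarrow> unitary_mat n (cadj U)"
  unfolding unitary_mat_def by auto

lemma unitary_cancel_left: "unitary_mat n U \<Longrightarrow> Y \<in> carrier_mat n m \<Longrightarrow> cadj U * (U * Y) = Y"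
  using assoc_mult_mat[of "cadj U" n n U n Y m] unfolding unitary_mat_def by auto

lemma unitary_cancel_right: "unitary_mat n U \<Longrightarrow> Y \<in> carrier_mat n m \<Longrightarrow> U * (cadj U * Y) = Y"
  using assoc_mult_mat[of U n n "cadj U" n Y m] unfolding unitary_mat_def by auto

lemma unitary_mult:
  assumes U: "unitary_mat n U" and V: "unitary_mat n V"
  shows "unitary_mat n (U * V)"
proof (rule unitaryI)
  have Uc: "U \<in> carrier_mat n n" and Vc: "V \<in> carrier_mat n n"
    using U V by (auto simp: unitary_carrier_mat)
  then show "U * V \<in> carrier_mat n n" by simp
  have "cadj (U * V) * (U * V) = cadj V * (cadj U * (U * V))"
    using Uc Vc by (simp add: cadj_mult[OF Uc Vc] assoc_mult_mat[of _ n n _ n _ n])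
  then show "cadj (U * V) * (U * V) = 1\<^sub>m n"
    using V by (simp add: unitary_cancel_left[OF U Vc] unitary_mat_def)
qed

lemma unitary_mult_vec_cancel:
  assumes U: "unitary_mat n U" and x: "x \<in> carrier_vec n"
  shows "cadj U *\<^sub>v (U *\<^sub>v x) = x"
proof -
  have "cadj U *\<^sub>v (U *\<^sub>v x) = (cadj U * U) *\<^sub>v x"
    using U x assoc_mult_mat_vec[of "cadj U" n n U n x] by (simp add: unitary_carrier_mat)
  then show ?thesis using U x by (simp add: unitary_mat_def)
qed

lemma index_cadj_mult_self:
  assumes "U \<in> carrier_mat n m" "i < m" "j < m"
  shows "(cadj U * U) $$ (i,j) = col U j \<bullet>c col U i"
  using assms by (auto simp: index_mult_mat_sum[of _ m n _ m] scalar_prod_def lessThan_atLeast0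
      mult.commute intro!: sum.cong)

section \<open>The spectral theorem\<close>

lemma cscalar_prod_smult:
  fixes v w :: "complex vec"
  assumes "v \<in> carrier_vec n" "w \<in> carrier_vec n"
  shows "(a \<cdot>\<^sub>v v) \<bullet>c (b \<cdot>\<^sub>v w) = a * cnj b * (v \<bullet>c w)"
  using assms by (simp add: scalar_prod_def sum_distrib_left algebra_simps)

definition normalize_vec :: "complex vec \<Rightarrow> complex vec" where
  "normalize_vec v = complex_of_real (1 / sqrt (Re (v \<bullet>c v))) \<cdot>\<^sub>v v"

lemma normalize_vec_carrier [simp]: "v \<in> carrier_vec n \<Longrightarrow> normalize_vec v \<in> carrier_vec n"
  by (simp add: normalize_vec_def)

lemma normalize_vec_unit: "v \<bullet>c v = 1 \<Longrightarrow> normalize_vec v = v"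
  by (simp add: normalize_vec_def)

lemma normalize_vec_orthogonal:
  "v \<in> carrier_vec n \<Longrightarrow> w \<in> carrier_vec n \<Longrightarrow> v \<bullet>c w = 0 \<Longrightarrow> normalize_vec v \<bullet>c normalize_vec w = 0"
  unfolding normalize_vec_def by (subst cscalar_prod_smult) auto

lemma normalize_vec_norm:
  assumes v: "v \<in> carrier_vec n" and v0: "v \<noteq> 0\<^sub>v n"
  shows "normalize_vec v \<bullet>c normalize_vec v = 1"
proof -
  define s where "s = Re (v \<bullet>c v)"
  have "v \<bullet>c v > 0" using v v0 by simp
  then have s: "s > 0" and vv: "v \<bullet>c v = complex_of_real s"
    by (auto simp: s_def less_complex_def complex_eq_iff)
  have "normalize_vec v \<bullet>c normalize_vec v = complex_of_real (1 / sqrt s * (1 / sqrt s) * s)"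
    unfolding normalize_vec_def using v
    by (subst cscalar_prod_smult) (simp_all only: vv Re_complex_of_real complex_cnj_complex_of_real
        of_real_mult[symmetric] carrier_vec_def)
  also have "\<dots> = 1" using s by (simp add: field_simps)
  finally show ?thesis .
qed

lemma unitary_mat_of_cols:
  assumes ws: "set ws \<subseteq> carrier_vec n" "length ws = n"
    and orth: "\<And>i j. i < n \<Longrightarrow> j < n \<Longrightarrow> ws ! j \<bullet>c ws ! i = (if i = j then 1 else 0)"
  shows "unitary_mat n (mat_of_cols n ws)"
proof (rule unitaryI)
  show W: "mat_of_cols n ws \<in> carrier_mat n n" using mat_of_cols_carrier(1)[of n ws] ws by simp
  show "cadj (mat_of_cols n ws) * mat_of_cols n ws = 1\<^sub>m n"
  proof (rule eq_matI)
    fix i j assume "i < dim_row (1\<^sub>m n)" "j < dim_col (1\<^sub>m n)"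
    then have i: "i < n" and j: "j < n" by auto
    have "ws ! i \<in> carrier_vec n" "ws ! j \<in> carrier_vec n"
      using ws i j nth_mem by blast+
    then have "(cadj (mat_of_cols n ws) * mat_of_cols n ws) $$ (i,j) = ws ! j \<bullet>c ws ! i"
      using index_cadj_mult_self[OF W i j] ws i j by simp
    then show "(cadj (mat_of_cols n ws) * mat_of_cols n ws) $$ (i,j) = 1\<^sub>m n $$ (i,j)"
      using orth i j by simp
  qed (use W in auto)
qed

lemma unitary_extension:
  assumes u: "u \<in> carrier_vec n" and uu: "u \<bullet>c u = 1"
  obtains U where "unitary_mat n U" "col U 0 = u"
proof -
  have u0: "u \<noteq> 0\<^sub>v n" using uu u by auto
  then have n: "0 < n" using u by (cases n) auto
  interpret cof_vec_space n "TYPE(complex)" .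
  define b where "b = basis_completion u"
  from basis_completion[OF u u0, folded b_def]
  have b: "set b \<subseteq> carrier_vec n" "distinct b" "\<not> lin_dep (set b)" "hd b = u" "length b = n"
    by auto
  then obtain vs where bv: "b = u # vs" using n by (cases b) auto
  define ws where "ws = gram_schmidt n b"
  from gram_schmidt_result[OF b(1-3) refl, folded ws_def]
  have ws: "set ws \<subseteq> carrier_vec n" "corthogonal ws" "length ws = n" by (auto simp: b(5))
  have "hd ws = u" using gram_schmidt_hd[OF u, of vs] by (simp add: ws_def bv)
  then have ws0: "ws ! 0 = u" using n ws(3) by (cases ws) auto
  define us where "us = map normalize_vec ws"
  have us: "set us \<subseteq> carrier_vec n" "length us = n" using ws by (auto simp: us_def)
  have "us ! j \<bullet>c us ! i = (if i = j then 1 else 0)" if i: "i < n" and j: "j < n" for i j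
  proof -
    have wsi: "ws ! i \<in> carrier_vec n" and wsj: "ws ! j \<in> carrier_vec n"
      using ws i j by auto
    have "ws ! j \<bullet>c ws ! i = 0 \<longleftrightarrow> j \<noteq> i" using corthogonalD[OF ws(2)] ws(3) i j by simp
    then show ?thesis
      using i j ws(3) wsi wsj normalize_vec_orthogonal[OF wsj wsi] normalize_vec_norm[OF wsi]
      by (auto simp: us_def)
  qed
  then have "unitary_mat n (mat_of_cols n us)" using us by (intro unitary_mat_of_cols)
  moreover have "col (mat_of_cols n us) 0 = us ! 0"
    using us n by (intro col_mat_of_cols) auto
  then have "col (mat_of_cols n us) 0 = u"
    using n ws ws0 uu by (simp add: us_def normalize_vec_unit)
  ultimately show thesis using that by blast
qed

lemma unit_eigenvector_exists:
  fixes A :: "complex mat"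
  assumes A: "A \<in> carrier_mat n n" and n: "0 < n"
  obtains e u where "u \<in> carrier_vec n" "u \<bullet>c u = 1" "A *\<^sub>v u = e \<cdot>\<^sub>v u"
proof -
  have "degree (char_poly A) = n" using degree_monic_char_poly[OF A] by auto
  then have "\<not> constant (poly (char_poly A))" using n by (simp add: constant_degree)
  then obtain e where "poly (char_poly A) e = 0" using fundamental_theorem_of_algebra by blast
  then have "eigenvalue A e" using eigenvalue_root_char_poly[OF A] by simp
  then obtain v where v: "v \<in> carrier_vec n" "v \<noteq> 0\<^sub>v n" and Av: "A *\<^sub>v v = e \<cdot>\<^sub>v v"
    unfolding eigenvalue_def eigenvector_def using A by auto
  have "A *\<^sub>v normalize_vec v = e \<cdot>\<^sub>v normalize_vec v"
    using A v Av by (simp add: normalize_vec_def mult_mat_vec smult_smult_assoc mult.commute)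
  then show thesis using v by (intro that[of "normalize_vec v" e]) (auto simp: normalize_vec_norm)
qed

definition direct_sum_one :: "complex mat \<Rightarrow> complex mat" where
  "direct_sum_one A = mat (Suc (dim_row A)) (Suc (dim_col A))
     (\<lambda>(i,j). if i = 0 \<and> j = 0 then 1 else if i = 0 \<or> j = 0 then 0 else A $$ (i - 1, j - 1))"

lemma direct_sum_one_carrier_mat [simp]:
  "A \<in> carrier_mat m m \<Longrightarrow> direct_sum_one A \<in> carrier_mat (Suc m) (Suc m)"
  unfolding direct_sum_one_def by auto

lemma unitary_direct_sum_one:
  assumes U: "unitary_mat m U"
  shows "unitary_mat (Suc m) (direct_sum_one U)"
proof (rule unitaryI)
  have Uc: "U \<in> carrier_mat m m" using U by (rule unitary_carrier_mat)
  show D: "direct_sum_one U \<in> carrier_mat (Suc m) (Suc m)" using Uc by simp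
  show "cadj (direct_sum_one U) * direct_sum_one U = 1\<^sub>m (Suc m)"
  proof (rule eq_matI)
    fix i j assume "i < dim_row (1\<^sub>m (Suc m))" "j < dim_col (1\<^sub>m (Suc m))"
    then have i: "i < Suc m" and j: "j < Suc m" by auto
    let ?D = "direct_sum_one U"
    have "(cadj ?D * ?D) $$ (i,j) = (\<Sum>k<Suc m. cadj ?D $$ (i,k) * ?D $$ (k,j))"
      using D i j by (intro index_mult_mat_sum) auto
    also have "\<dots> = (\<Sum>k<Suc m. cnj (?D $$ (k,i)) * ?D $$ (k,j))"
      using D i by (intro sum.cong) auto
    also have "\<dots> = cnj (?D $$ (0,i)) * ?D $$ (0,j) + (\<Sum>k<m. cnj (?D $$ (Suc k,i)) * ?D $$ (Suc k,j))"
      unfolding sum.lessThan_Suc_shift ..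
    also have "\<dots> = 1\<^sub>m (Suc m) $$ (i,j)"
    proof (cases "i = 0 \<or> j = 0")
      case True
      then show ?thesis using i j Uc by (auto simp: direct_sum_one_def)
    next
      case False
      then obtain i' j' where ij: "i = Suc i'" "j = Suc j'" by (cases i; cases j) auto
      have "(\<Sum>k<m. cnj (?D $$ (Suc k,i)) * ?D $$ (Suc k,j)) = (\<Sum>k<m. cadj U $$ (i',k) * U $$ (k,j'))"
        using i j Uc by (intro sum.cong) (auto simp: direct_sum_one_def ij)
      also have "\<dots> = (cadj U * U) $$ (i',j')"
        using i j Uc by (intro index_mult_mat_sum[symmetric]) (auto simp: ij)
      finally show ?thesis using i j U Uc by (auto simp: direct_sum_one_def ij unitary_mat_def)
    qed
    finally show "(cadj ?D * ?D) $$ (i,j) = 1\<^sub>m (Suc m) $$ (i,j)" .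
  qed (use D in auto)
qed

lemma hermitian_index:
  assumes "cadj A = A" "i < dim_row A" "j < dim_row A"
  shows "A $$ (i,j) = cnj (A $$ (j,i))"
  using assms index_cadj[of i A j] cadj_dim(1)[of A] by metis

lemma hermitian_unitary_conj:
  assumes A: "A \<in> carrier_mat n n" "cadj A = A" and U: "U \<in> carrier_mat n n"
  shows "cadj (cadj U * A * U) = cadj U * A * U"
proof -
  have "cadj (cadj U * A * U) = cadj U * cadj (cadj U * A)"
    using A U by (intro cadj_mult[of _ n n]) auto
  also have "cadj (cadj U * A) = A * U"
    using A U by (subst cadj_mult[of _ n n]) auto
  finally show ?thesis using A U by (simp add: assoc_mult_mat[of _ n n _ n _ n])
qed

lemma spec_dec_carrier_mat: "spec_dec n A U l \<Longrightarrow> A \<in> carrier_mat n n"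
  unfolding spec_dec_def unitary_mat_def by auto

lemma spec_dec_direct_sum_one:
  assumes B: "B \<in> carrier_mat (Suc m) (Suc m)"
    and col0: "\<And>i. i < Suc m \<Longrightarrow> B $$ (i,0) = (if i = 0 then complex_of_real e else 0)"
    and row0: "\<And>j. j < Suc m \<Longrightarrow> B $$ (0,j) = (if j = 0 then complex_of_real e else 0)"
    and dec: "spec_dec m (mat m m (\<lambda>(i,j). B $$ (Suc i, Suc j))) U l"
  shows "spec_dec (Suc m) B (direct_sum_one U) (case_nat e l)"
proof -
  have U: "unitary_mat m U" using dec by (simp add: spec_dec_def)
  then have Uc: "U \<in> carrier_mat m m" by (rule unitary_carrier_mat)
  have Ueq: "mat m m (\<lambda>(i,j). B $$ (Suc i, Suc j)) = U * rdiag m l * cadj U"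
    using dec by (simp add: spec_dec_def)
  let ?D = "direct_sum_one U" and ?l = "case_nat e l"
  have D: "?D \<in> carrier_mat (Suc m) (Suc m)" using Uc by simp
  have "B = ?D * rdiag (Suc m) ?l * cadj ?D"
  proof (rule eq_matI)
    fix i j assume "i < dim_row (?D * rdiag (Suc m) ?l * cadj ?D)" "j < dim_col (?D * rdiag (Suc m) ?l * cadj ?D)"
    then have i: "i < Suc m" and j: "j < Suc m" using D by auto
    have "(?D * rdiag (Suc m) ?l * cadj ?D) $$ (i,j)
        = (\<Sum>t<Suc m. ?D $$ (i,t) * complex_of_real (?l t) * cadj ?D $$ (t,j))"
      using D i j by (intro index_mult_rdiag_mult) auto
    also have "\<dots> = (\<Sum>t<Suc m. ?D $$ (i,t) * complex_of_real (?l t) * cnj (?D $$ (j,t)))"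
      using D j by (intro sum.cong) auto
    also have "\<dots> = ?D $$ (i,0) * complex_of_real e * cnj (?D $$ (j,0)) +
        (\<Sum>t<m. ?D $$ (i,Suc t) * complex_of_real (l t) * cnj (?D $$ (j,Suc t)))"
      unfolding sum.lessThan_Suc_shift by simp
    also have "\<dots> = B $$ (i,j)"
    proof (cases "i = 0 \<or> j = 0")
      case True
      then show ?thesis using i j col0 row0 Uc by (auto simp: direct_sum_one_def)
    next
      case False
      then obtain i' j' where ij: "i = Suc i'" "j = Suc j'" by (cases i; cases j) auto
      have "(\<Sum>t<m. ?D $$ (i,Suc t) * complex_of_real (l t) * cnj (?D $$ (j,Suc t)))
          = (\<Sum>t<m. U $$ (i',t) * complex_of_real (l t) * cadj U $$ (t,j'))"
        using i j Uc by (intro sum.cong) (auto simp: direct_sum_one_def ij)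
      also have "\<dots> = (U * rdiag m l * cadj U) $$ (i',j')"
        using i j Uc by (intro index_mult_rdiag_mult[symmetric]) (auto simp: ij)
      also have "\<dots> = B $$ (i,j)"
        using dec i j by (simp add: spec_dec_def ij flip: Ueq)
      finally show ?thesis using i j Uc by (auto simp: direct_sum_one_def ij)
    qed
    finally show "B $$ (i,j) = (?D * rdiag (Suc m) ?l * cadj ?D) $$ (i,j)" by simp
  qed (use B D in auto)
  then show ?thesis using unitary_direct_sum_one[OF U] by (simp add: spec_dec_def)
qed

lemma spec_dec_unitary_conj:
  assumes U: "unitary_mat n U" and B: "spec_dec n B V l"
  shows "spec_dec n (U * B * cadj U) (U * V) l"
proof -
  have Uc: "U \<in> carrier_mat n n" and Vc: "V \<in> carrier_mat n n"
    using U B by (auto simp: spec_dec_def unitary_carrier_mat)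
  have "U * B * cadj U = (U * V) * rdiag n l * cadj (U * V)"
    using B Uc Vc
    by (simp add: spec_dec_def cadj_mult[OF Uc Vc] assoc_mult_mat[of _ n n _ n _ n] mult_carrier_mat[of _ n n _ n])
  then show ?thesis using U B unitary_mult by (auto simp: spec_dec_def)
qed

lemma unitary_conj_eigenvector_col:
  assumes A: "A \<in> carrier_mat n n" and U: "unitary_mat n U"
    and Au: "A *\<^sub>v col U 0 = e \<cdot>\<^sub>v col U 0" and i: "i < n"
  shows "(cadj U * A * U) $$ (i,0) = (if i = 0 then e else 0)"
proof -
  have Uc: "U \<in> carrier_mat n n" using U by (rule unitary_carrier_mat)
  have n: "0 < n" using i by simp
  have u: "col U 0 \<in> carrier_vec n" using Uc n by simp
  have "col (cadj U * A * U) 0 = cadj U *\<^sub>v (A *\<^sub>v col U 0)"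
    using Uc A n u mult_carrier_mat[of "cadj U" n n A n] col_mult2[of "cadj U * A" n n U n 0]
      assoc_mult_mat_vec[of "cadj U" n n A n "col U 0"]
    by simp
  also have "\<dots> = e \<cdot>\<^sub>v col (cadj U * U) 0"
    using Uc u n col_mult2[of "cadj U" n n U n 0] by (simp add: Au mult_mat_vec[of _ n n])
  finally have col0: "col (cadj U * A * U) 0 = e \<cdot>\<^sub>v unit_vec n 0"
    using U n by (simp add: unitary_mat_def)
  have "(cadj U * A * U) $$ (i,0) = col (cadj U * A * U) 0 $ i"
    using carrier_matD[OF Uc] i n by simp
  also have "\<dots> = (if i = 0 then e else 0)"
    using i by (simp add: col0)
  finally show ?thesis .
qed

lemma hermitian_lower_block:
  assumes B: "B \<in> carrier_mat (Suc m) (Suc m)" and hB: "cadj B = B"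
  shows "hermitian_mat m (mat m m (\<lambda>(i,j). B $$ (Suc i, Suc j)))"
  unfolding hermitian_mat_def
proof
  show "mat m m (\<lambda>(i,j). B $$ (Suc i, Suc j)) \<in> carrier_mat m m" by simp
  show "cadj (mat m m (\<lambda>(i,j). B $$ (Suc i, Suc j))) = mat m m (\<lambda>(i,j). B $$ (Suc i, Suc j))"
  proof (rule eq_matI)
    fix i j assume ij: "i < dim_row (mat m m (\<lambda>(i,j). B $$ (Suc i, Suc j)))"
      "j < dim_col (mat m m (\<lambda>(i,j). B $$ (Suc i, Suc j)))"
    then have "B $$ (Suc i, Suc j) = cnj (B $$ (Suc j, Suc i))"
      using B by (intro hermitian_index[OF hB]) auto
    with ij show "cadj (mat m m (\<lambda>(i,j). B $$ (Suc i, Suc j))) $$ (i,j)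
        = mat m m (\<lambda>(i,j). B $$ (Suc i, Suc j)) $$ (i,j)" by simp
  qed simp_all
qed

lemma unitary_conj_cancel:
  assumes U: "unitary_mat n U" and A: "A \<in> carrier_mat n n"
  shows "U * (cadj U * A * U) * cadj U = A"
proof -
  have Uc: "U \<in> carrier_mat n n" using U by (rule unitary_carrier_mat)
  have "U * (cadj U * A * U) = A * U"
    using Uc A unitary_cancel_right[OF U, of "A * U" n]
    by (simp add: assoc_mult_mat[of _ n n _ n _ n])
  then have "U * (cadj U * A * U) * cadj U = A * (U * cadj U)"
    using Uc A by (simp add: assoc_mult_mat[of _ n n _ n _ n])
  then show ?thesis using U A by (simp add: unitary_mat_def)
qed

text \<open>Induction on the dimension: conjugating by a unitary matrix whose first column is a unit
  eigenvector splits off a 1 x 1 block.\<close>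

lemma hermitian_spec_dec_exists: "hermitian_mat n A \<Longrightarrow> \<exists>U l. spec_dec n A U l"
proof (induction n arbitrary: A)
  case 0
  then have "A = 1\<^sub>m 0 * rdiag 0 (\<lambda>_. 0) * cadj (1\<^sub>m 0)"
    by (auto simp: hermitian_mat_def intro!: eq_matI)
  moreover have "unitary_mat 0 (1\<^sub>m 0)" by (auto simp: unitary_mat_def intro!: eq_matI)
  ultimately show ?case unfolding spec_dec_def by blast
next
  case (Suc m A)
  have A: "A \<in> carrier_mat (Suc m) (Suc m)" and hA: "cadj A = A"
    using Suc.prems by (auto simp: hermitian_mat_def)
  obtain e u where u: "u \<in> carrier_vec (Suc m)" "u \<bullet>c u = 1" and Au: "A *\<^sub>v u = e \<cdot>\<^sub>v u"
    using unit_eigenvector_exists[OF A] by blast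
  obtain U where U: "unitary_mat (Suc m) U" and U0: "col U 0 = u"
    using unitary_extension[OF u] by blast
  have Uc: "U \<in> carrier_mat (Suc m) (Suc m)" using U by (rule unitary_carrier_mat)
  define B where "B = cadj U * A * U"
  have Bc: "B \<in> carrier_mat (Suc m) (Suc m)" using Uc A unfolding B_def
    by (metis cadj_carrier_mat mult_carrier_mat)
  have hB: "cadj B = B" using hermitian_unitary_conj[OF A hA Uc] by (simp add: B_def)
  have B0: "B $$ (i,0) = (if i = 0 then e else 0)" if "i < Suc m" for i
    using unitary_conj_eigenvector_col[OF A U _ that] Au by (simp add: B_def U0)
  have "e = B $$ (0,0)" using B0[of 0] by simp
  also have "\<dots> = cnj (B $$ (0,0))" using Bc by (intro hermitian_index[OF hB]) auto
  finally have "cnj e = e" using B0[of 0] by simp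
  then have e: "complex_of_real (Re e) = e" by (simp add: complex_eq_iff)
  have B0': "B $$ (0,j) = (if j = 0 then e else 0)" if j: "j < Suc m" for j
  proof -
    have "B $$ (0,j) = cnj (B $$ (j,0))" using Bc j by (intro hermitian_index[OF hB]) auto
    then show ?thesis using B0[OF j] \<open>cnj e = e\<close> by simp
  qed
  obtain U' l where "spec_dec m (mat m m (\<lambda>(i,j). B $$ (Suc i, Suc j))) U' l"
    using Suc.IH[OF hermitian_lower_block[OF Bc hB]] by blast
  then have "spec_dec (Suc m) B (direct_sum_one U') (case_nat (Re e) l)"
    using Bc B0 B0' e by (intro spec_dec_direct_sum_one) auto
  then have "spec_dec (Suc m) (U * B * cadj U) (U * direct_sum_one U') (case_nat (Re e) l)"
    by (rule spec_dec_unitary_conj[OF U])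
  then show ?case using unitary_conj_cancel[OF U A] by (auto simp: B_def)
qed

section \<open>Functional calculus and traces\<close>

text \<open>The matrix W = U^* U' intertwines the two diagonalisations, so its entry (i,j) vanishes
  unless l i = l' j; hence it also intertwines the diagonal matrices of f o l and f o l'.\<close>

lemma spec_dec_fun_unique:
  assumes d: "spec_dec n A U l" and d': "spec_dec n A U' l'"
  shows "U * rdiag n (f \<circ> l) * cadj U = U' * rdiag n (f \<circ> l') * cadj U'"
proof -
  have U: "unitary_mat n U" and U': "unitary_mat n U'" using d d' by (auto simp: spec_dec_def)
  have Uc: "U \<in> carrier_mat n n" and U'c: "U' \<in> carrier_mat n n"
    using U U' by (auto simp: unitary_carrier_mat)
  have A: "A = U * rdiag n l * cadj U" and A': "A = U' * rdiag n l' * cadj U'"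
    using d d' by (auto simp: spec_dec_def)
  have UU': "U * cadj U = 1\<^sub>m n" "U' * cadj U' = 1\<^sub>m n" "cadj U' * U' = 1\<^sub>m n"
    using U U' by (auto simp: unitary_mat_def)
  define W where "W = cadj U * U'"
  have Wc: "W \<in> carrier_mat n n" using Uc U'c unfolding W_def by (metis cadj_carrier_mat mult_carrier_mat)
  note simps = assoc_mult_mat[of _ n n _ n _ n] mult_carrier_mat[of _ n n _ n]
    unitary_cancel_left[OF U, of _ n] unitary_cancel_right[OF U, of _ n]
    unitary_cancel_left[OF U', of _ n] unitary_cancel_right[OF U', of _ n]
  have "rdiag n l * W = cadj U * (A * U')" unfolding A W_def using Uc U'c by (simp add: simps)
  also have "\<dots> = W * rdiag n l'" unfolding A' W_def using Uc U'c UU' by (simp add: simps)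
  finally have intertwine: "rdiag n l * W = W * rdiag n l'" .
  have "rdiag n (f \<circ> l) * W = W * rdiag n (f \<circ> l')"
  proof (rule eq_matI)
    fix i j assume "i < dim_row (W * rdiag n (f \<circ> l'))" "j < dim_col (W * rdiag n (f \<circ> l'))"
    then have i: "i < n" and j: "j < n" using Wc by auto
    have "complex_of_real (l i) * W $$ (i,j) = W $$ (i,j) * complex_of_real (l' j)"
      using arg_cong[OF intertwine, of "\<lambda>M. M $$ (i,j)"] index_rdiag_mult[OF Wc i j]
        index_mult_rdiag[OF Wc i j] by simp
    then have "W $$ (i,j) = 0 \<or> l i = l' j" by (auto simp: mult.commute)
    then show "(rdiag n (f \<circ> l) * W) $$ (i,j) = (W * rdiag n (f \<circ> l')) $$ (i,j)"
      using index_rdiag_mult[OF Wc i j] index_mult_rdiag[OF Wc i j] by auto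
  qed (use Wc in auto)
  then have "U * ((rdiag n (f \<circ> l) * W) * cadj U') = U * ((W * rdiag n (f \<circ> l')) * cadj U')"
    by simp
  then show ?thesis
    unfolding W_def using Uc U'c UU' by (simp add: simps)
qed

lemma mat_fun_spec_dec:
  assumes d: "spec_dec n A U l"
  shows "mat_fun f A = U * rdiag n (f \<circ> l) * cadj U"
proof -
  let ?P = "\<lambda>B. \<exists>U l. spec_dec n A U l \<and> B = U * rdiag n (f \<circ> l) * cadj U"
  have "dim_row A = n" using spec_dec_carrier_mat[OF d] by auto
  then have "mat_fun f A = (SOME B. ?P B)" by (simp add: mat_fun_def)
  moreover from someI_ex[of ?P] obtain U' l' where "spec_dec n A U' l'"
    and "(SOME B. ?P B) = U' * rdiag n (f \<circ> l') * cadj U'"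
    using d by blast
  ultimately show ?thesis using spec_dec_fun_unique[OF _ d] by metis
qed

lemma mtrace_mult_sum:
  assumes A: "A \<in> carrier_mat n k" and B: "B \<in> carrier_mat k n"
  shows "mtrace (A * B) = (\<Sum>i<n. \<Sum>l<k. A $$ (i,l) * B $$ (l,i))"
proof -
  have "mtrace (A * B) = (\<Sum>i<n. (A * B) $$ (i,i))" using A B by (simp add: mtrace_def)
  also have "\<dots> = (\<Sum>i<n. \<Sum>l<k. A $$ (i,l) * B $$ (l,i))"
    using A B by (intro sum.cong refl index_mult_mat_sum) auto
  finally show ?thesis .
qed

lemma mtrace_mult_comm:
  assumes A: "A \<in> carrier_mat n k" and B: "B \<in> carrier_mat k n"
  shows "mtrace (A * B) = mtrace (B * A)"
  unfolding mtrace_mult_sum[OF A B] mtrace_mult_sum[OF B A]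
  by (subst sum.swap) (simp add: mult.commute)

lemma mtrace_diff:
  "A \<in> carrier_mat n n \<Longrightarrow> B \<in> carrier_mat n n \<Longrightarrow> mtrace (A - B) = mtrace A - mtrace B"
  by (simp add: mtrace_def sum_subtractf)

lemma mtrace_spec_dec:
  assumes d: "spec_dec n A U l"
  shows "mtrace A = complex_of_real (\<Sum>i<n. l i)"
proof -
  have U: "unitary_mat n U" and A: "A = U * rdiag n l * cadj U" using d by (auto simp: spec_dec_def)
  have Uc: "U \<in> carrier_mat n n" using U by (rule unitary_carrier_mat)
  have "mtrace A = mtrace (cadj U * (U * rdiag n l))"
    using Uc A by (simp add: mtrace_mult_comm[of _ n n])
  also have "\<dots> = mtrace (rdiag n l)" using unitary_cancel_left[OF U, of "rdiag n l" n] by simp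
  finally show ?thesis by (simp add: mtrace_def)
qed

lemma mult_cnj_cmod_sq: "z * cnj z = complex_of_real ((cmod z)\<^sup>2)"
  by (rule complex_norm_square[symmetric])

definition overlap :: "complex mat \<Rightarrow> complex mat \<Rightarrow> nat \<Rightarrow> nat \<Rightarrow> real" where
  "overlap U V i j = (cmod ((cadj U * V) $$ (i,j)))\<^sup>2"

definition doubly_stochastic :: "nat \<Rightarrow> (nat \<Rightarrow> nat \<Rightarrow> real) \<Rightarrow> bool" where
  "doubly_stochastic n c \<longleftrightarrow> (\<forall>i<n. \<forall>j<n. 0 \<le> c i j) \<and>
     (\<forall>i<n. (\<Sum>j<n. c i j) = 1) \<and> (\<forall>j<n. (\<Sum>i<n. c i j) = 1)"

lemma doubly_stochastic_sum_left:
  "doubly_stochastic n c \<Longrightarrow> (\<Sum>i<n. \<Sum>j<n. c i j * f i) = (\<Sum>i<n. f i)"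
  by (simp add: doubly_stochastic_def sum_distrib_right[symmetric])

lemma doubly_stochastic_sum_right:
  "doubly_stochastic n c \<Longrightarrow> (\<Sum>i<n. \<Sum>j<n. c i j * g j) = (\<Sum>j<n. g j)"
  by (subst sum.swap) (simp add: doubly_stochastic_def sum_distrib_right[symmetric])

lemma unitary_sum_norm_row:
  assumes W: "unitary_mat n W" and i: "i < n"
  shows "(\<Sum>j<n. (cmod (W $$ (i,j)))\<^sup>2) = 1"
proof -
  have Wc: "W \<in> carrier_mat n n" using W by (rule unitary_carrier_mat)
  have "complex_of_real (\<Sum>j<n. (cmod (W $$ (i,j)))\<^sup>2) = (\<Sum>j<n. W $$ (i,j) * cadj W $$ (j,i))"
    unfolding of_real_sum complex_norm_square using Wc i by (intro sum.cong) auto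
  also have "\<dots> = (W * cadj W) $$ (i,i)"
    using Wc i by (intro index_mult_mat_sum[symmetric]) auto
  also have "\<dots> = 1" using W i by (simp add: unitary_mat_def)
  finally show ?thesis by (metis of_real_eq_1_iff)
qed

lemma doubly_stochastic_overlap:
  assumes U: "unitary_mat n U" and V: "unitary_mat n V"
  shows "doubly_stochastic n (overlap U V)"
proof -
  have W: "unitary_mat n (cadj U * V)" by (rule unitary_mult[OF unitary_cadj[OF U] V])
  have Wc: "cadj U * V \<in> carrier_mat n n" using W by (rule unitary_carrier_mat)
  have "(\<Sum>i<n. overlap U V i j) = 1" if j: "j < n" for j
  proof -
    have "(\<Sum>i<n. overlap U V i j) = (\<Sum>i<n. (cmod (cadj (cadj U * V) $$ (j,i)))\<^sup>2)"
      using carrier_matD[OF Wc] j by (intro sum.cong) (auto simp: overlap_def)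
    then show ?thesis using unitary_sum_norm_row[OF unitary_cadj[OF W] j] by simp
  qed
  then show ?thesis
    using unitary_sum_norm_row[OF W] by (simp add: doubly_stochastic_def overlap_def)
qed

lemma overlap_self:
  "unitary_mat n U \<Longrightarrow> i < n \<Longrightarrow> j < n \<Longrightarrow> overlap U U i j = (if i = j then 1 else 0)"
  by (simp add: overlap_def unitary_mat_def)

lemma mtrace_spec_dec_mult:
  assumes U: "unitary_mat n U" and V: "unitary_mat n V"
  shows "mtrace ((U * rdiag n a * cadj U) * (V * rdiag n b * cadj V)) =
    complex_of_real (\<Sum>i<n. \<Sum>j<n. overlap U V i j * a i * b j)"
proof -
  have Uc: "U \<in> carrier_mat n n" and Vc: "V \<in> carrier_mat n n"
    using U V by (auto simp: unitary_carrier_mat)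
  define W where "W = cadj U * V"
  have Wc: "W \<in> carrier_mat n n" using Uc Vc unfolding W_def by (metis cadj_carrier_mat mult_carrier_mat)
  define M where "M = rdiag n a * (W * rdiag n b * cadj W)"
  have WW: "W * rdiag n b * cadj W \<in> carrier_mat n n" using Wc by (rule rdiag_conj_carrier_mat)
  then have Mc: "M \<in> carrier_mat n n" unfolding M_def by (metis mult_carrier_mat rdiag_carrier_mat(1))
  note simps = assoc_mult_mat[of _ n n _ n _ n] mult_carrier_mat[of _ n n _ n]
  have "(U * rdiag n a * cadj U) * (V * rdiag n b * cadj V) = U * (M * cadj U)"
    unfolding M_def W_def using Uc Vc U right_mult_one_mat[OF cadj_carrier_mat[OF Vc]]
    by (simp add: simps cadj_mult[of _ n n _ n] unitary_cancel_right[OF U] unitary_mat_def)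
  then have "mtrace ((U * rdiag n a * cadj U) * (V * rdiag n b * cadj V)) = mtrace (M * cadj U * U)"
    using Uc Mc by (simp add: mtrace_mult_comm[of U n n] assoc_mult_mat[of _ n n _ n _ n])
  also have "M * cadj U * U = M"
    using Uc Mc U by (simp add: assoc_mult_mat[of _ n n _ n _ n] unitary_mat_def)
  also have "mtrace M = (\<Sum>i<n. complex_of_real (\<Sum>j<n. overlap U V i j * a i * b j))"
  proof (unfold mtrace_def, rule sum.cong)
    fix i assume "i \<in> {..<n}"
    then have i: "i < n" by simp
    have "M $$ (i,i) = complex_of_real (a i) *
        (\<Sum>j<n. W $$ (i,j) * complex_of_real (b j) * cadj W $$ (j,i))"
      unfolding M_def index_rdiag_mult[OF WW i i] index_mult_rdiag_mult[OF Wc cadj_carrier_mat[OF Wc] i i] ..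
    also have "\<dots> = complex_of_real (a i) * (\<Sum>j<n. complex_of_real (overlap U V i j * b j))"
    proof (intro arg_cong[where f = "\<lambda>x. complex_of_real (a i) * x"] sum.cong refl)
      fix j assume "j \<in> {..<n}"
      then have "cadj W $$ (j,i) = cnj (W $$ (i,j))" using i Wc by simp
      then have "W $$ (i,j) * complex_of_real (b j) * cadj W $$ (j,i)
          = complex_of_real (b j) * (W $$ (i,j) * cnj (W $$ (i,j)))" by (simp only: mult_ac)
      also have "\<dots> = complex_of_real (overlap U V i j * b j)"
        by (simp only: mult_cnj_cmod_sq overlap_def W_def of_real_mult mult.commute)
      finally show "W $$ (i,j) * complex_of_real (b j) * cadj W $$ (j,i) = complex_of_real (overlap U V i j * b j)" .
    qed
    also have "\<dots> = complex_of_real (\<Sum>j<n. overlap U V i j * a i * b j)"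
      by (simp add: sum_distrib_left algebra_simps)
    finally show "M $$ (i,i) = complex_of_real (\<Sum>j<n. overlap U V i j * a i * b j)" .
  qed (use Mc in simp)
  finally show ?thesis by simp
qed

lemma mtrace_spec_dec_mult_same:
  assumes U: "unitary_mat n U"
  shows "mtrace ((U * rdiag n a * cadj U) * (U * rdiag n b * cadj U)) = complex_of_real (\<Sum>i<n. a i * b i)"
proof -
  have "(\<Sum>j<n. overlap U U i j * a i * b j) = (\<Sum>j<n. if j = i then a i * b i else 0)" if "i < n" for i
    using U that by (intro sum.cong) (auto simp: overlap_self)
  then show ?thesis by (simp add: mtrace_spec_dec_mult[OF U U])
qed

lemma mtrace_spec_dec_mult_diff:
  fixes a b e :: "nat \<Rightarrow> real"
  assumes U: "unitary_mat n U" and V: "unitary_mat n V"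
  defines "A \<equiv> U * rdiag n a * cadj U" and "B \<equiv> U * rdiag n b * cadj U" and "C \<equiv> V * rdiag n e * cadj V"
  shows "mtrace (A * (B - C)) = complex_of_real (\<Sum>i<n. \<Sum>j<n. overlap U V i j * (a i * (b i - e j)))"
proof -
  have Ac: "A \<in> carrier_mat n n" and Bc: "B \<in> carrier_mat n n" and Cc: "C \<in> carrier_mat n n"
    unfolding A_def B_def C_def using U V by (simp_all add: rdiag_conj_carrier_mat unitary_carrier_mat)
  have "A * (B - C) = A * B - A * C" by (rule mult_minus_distrib_mat[OF Ac Bc Cc])
  then have "mtrace (A * (B - C)) = mtrace (A * B) - mtrace (A * C)"
    using Ac Bc Cc by (simp add: mtrace_diff[of _ n])
  also have "\<dots> = complex_of_real ((\<Sum>i<n. a i * b i) - (\<Sum>i<n. \<Sum>j<n. overlap U V i j * a i * e j))"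
    unfolding A_def B_def C_def by (simp add: mtrace_spec_dec_mult_same[OF U] mtrace_spec_dec_mult[OF U V])
  also have "(\<Sum>i<n. a i * b i) = (\<Sum>i<n. \<Sum>j<n. overlap U V i j * (a i * b i))"
    using doubly_stochastic_sum_left[OF doubly_stochastic_overlap[OF U V]] by simp
  finally show ?thesis by (simp add: right_diff_distrib sum_subtractf algebra_simps)
qed

lemma mtrace_spec_dec_diff_square:
  fixes a b :: "nat \<Rightarrow> real"
  assumes U: "unitary_mat n U" and V: "unitary_mat n V"
  defines "A \<equiv> U * rdiag n a * cadj U" and "B \<equiv> V * rdiag n b * cadj V"
  shows "mtrace ((A - B) * (A - B)) = complex_of_real (\<Sum>i<n. \<Sum>j<n. overlap U V i j * (a i - b j)\<^sup>2)"
proof -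
  have Uc: "U \<in> carrier_mat n n" and Vc: "V \<in> carrier_mat n n"
    using U V by (auto simp: unitary_carrier_mat)
  have Ac: "A \<in> carrier_mat n n" and Bc: "B \<in> carrier_mat n n"
    unfolding A_def B_def using Uc Vc by (simp_all add: rdiag_conj_carrier_mat)
  have ds: "doubly_stochastic n (overlap U V)" by (rule doubly_stochastic_overlap[OF U V])
  have "(A - B) * (A - B) = A * (A - B) - B * (A - B)"
    using Ac Bc by (intro minus_mult_distrib_mat) auto
  also have "\<dots> = A * A - A * B - (B * A - B * B)"
    using Ac Bc by (simp add: mult_minus_distrib_mat[OF Ac Ac Bc] mult_minus_distrib_mat[OF Bc Ac Bc])
  finally have "(A - B) * (A - B) = A * A - A * B - (B * A - B * B)" .
  moreover have "mtrace (A * A - A * B - (B * A - B * B))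
      = mtrace (A * A) - mtrace (A * B) - (mtrace (B * A) - mtrace (B * B))"
    using Ac Bc by (simp add: mtrace_diff[of _ n] minus_carrier_mat mult_carrier_mat[of _ n n _ n])
  ultimately have "mtrace ((A - B) * (A - B))
      = mtrace (A * A) - mtrace (A * B) - (mtrace (A * B) - mtrace (B * B))"
    using mtrace_mult_comm[OF Bc Ac] by simp
  also have "\<dots> = complex_of_real ((\<Sum>i<n. a i * a i) - 2 * (\<Sum>i<n. \<Sum>j<n. overlap U V i j * a i * b j)
      + (\<Sum>j<n. b j * b j))"
    unfolding A_def B_def using U V
    by (simp add: mtrace_spec_dec_mult_same mtrace_spec_dec_mult)
  also have "(\<Sum>i<n. a i * a i) = (\<Sum>i<n. \<Sum>j<n. overlap U V i j * (a i * a i))"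
    using doubly_stochastic_sum_left[OF ds] by simp
  also have "(\<Sum>j<n. b j * b j) = (\<Sum>i<n. \<Sum>j<n. overlap U V i j * (b j * b j))"
    using doubly_stochastic_sum_right[OF ds] by simp
  also have "(\<Sum>i<n. \<Sum>j<n. overlap U V i j * (a i * a i)) - 2 * (\<Sum>i<n. \<Sum>j<n. overlap U V i j * a i * b j)
      + (\<Sum>i<n. \<Sum>j<n. overlap U V i j * (b j * b j)) = (\<Sum>i<n. \<Sum>j<n. overlap U V i j * (a i - b j)\<^sup>2)"
  proof -
    have "(\<Sum>i<n. \<Sum>j<n. overlap U V i j * (a i - b j)\<^sup>2) = (\<Sum>i<n. \<Sum>j<n. overlap U V i j * (a i * a i)
        - 2 * (overlap U V i j * a i * b j) + overlap U V i j * (b j * b j))"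
      by (intro sum.cong refl) (simp add: power2_diff power2_eq_square algebra_simps)
    then show ?thesis by (simp add: sum.distrib sum_subtractf sum_distrib_left)
  qed
  finally show ?thesis .
qed

section \<open>A scalar inequality\<close>

lemma ln_one_minus_le:
  fixes x :: real
  assumes "0 \<le> x" "x < 1"
  shows "ln (1 - x) \<le> - x - x\<^sup>2 / 2"
proof -
  define f where "f y = ln (1 - y) + y + y\<^sup>2 / 2" for y :: real
  have f': "(f has_real_derivative (- y\<^sup>2 / (1 - y))) (at y)" if "y < 1" for y
  proof -
    have "(f has_real_derivative (- 1 / (1 - y) + 1 + y)) (at y)"
      unfolding f_def using that by (auto intro!: derivative_eq_intros simp: power2_eq_square)
    moreover have "- 1 / (1 - y) + 1 + y = - y\<^sup>2 / (1 - y)"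
      using that by (simp add: field_simps power2_eq_square)
    ultimately show ?thesis by simp
  qed
  have "f x \<le> f 0"
  proof (rule DERIV_nonpos_imp_nonincreasing[of 0 x f])
    fix y assume "0 \<le> y" "y \<le> x"
    then show "\<exists>d. (f has_real_derivative d) (at y) \<and> d \<le> 0"
      using f'[of y] assms by (intro exI[of _ "- y\<^sup>2 / (1 - y)"]) auto
  qed (use assms in simp)
  then show ?thesis by (simp add: f_def)
qed

lemma ln_le_half_diff_inverse:
  fixes t :: real
  assumes "1 \<le> t"
  shows "ln t \<le> (t - 1 / t) / 2"
proof -
  define f where "f y = (y - 1 / y) / 2 - ln y" for y :: real
  have f': "(f has_real_derivative ((y - 1)\<^sup>2 / (2 * y\<^sup>2))) (at y)" if "0 < y" for y
  proof -
    have "(f has_real_derivative ((1 + 1 / y\<^sup>2) / 2 - 1 / y)) (at y)"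
      unfolding f_def using that by (auto intro!: derivative_eq_intros simp: power2_eq_square field_simps)
    moreover have "(1 + 1 / y\<^sup>2) / 2 - 1 / y = (y - 1)\<^sup>2 / (2 * y\<^sup>2)"
      using that by (simp add: field_simps power2_eq_square)
    ultimately show ?thesis by simp
  qed
  have "f 1 \<le> f t"
  proof (rule DERIV_nonneg_imp_nondecreasing[of 1 t f])
    fix y assume "1 \<le> y" "y \<le> t"
    then show "\<exists>d. (f has_real_derivative d) (at y) \<and> 0 \<le> d"
      using f'[of y] by (intro exI[of _ "(y - 1)\<^sup>2 / (2 * y\<^sup>2)"]) auto
  qed (use assms in simp)
  then show ?thesis by (simp add: f_def)
qed

text \<open>The inequality for a single pair of eigenvalues p = t^2 q, divided by q.\<close>

lemma ln_sq_ratio_bound: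
  fixes t M :: real
  assumes t: "0 < t" and M: "2 * ln t \<le> M" and M0: "0 \<le> M"
  shows "2 * t\<^sup>2 * ln t - t\<^sup>2 + 1 \<le> (2 + M) * (t - 1)\<^sup>2"
proof (cases "t \<le> 1")
  case True
  define s where "s = 1 - t"
  have s: "0 \<le> s" "s < 1" using True t by (auto simp: s_def)
  have "ln t \<le> - s - s\<^sup>2 / 2" using ln_one_minus_le[OF s] by (simp add: s_def)
  then have "2 * t\<^sup>2 * ln t \<le> 2 * t\<^sup>2 * (- s - s\<^sup>2 / 2)" using t by (intro mult_left_mono) auto
  moreover have "2 * t\<^sup>2 * (- s - s\<^sup>2 / 2) - t\<^sup>2 + 1 = 2 * (t - 1)\<^sup>2 - s ^ 4"
    unfolding s_def by (simp add: power2_eq_square power4_eq_xxxx field_simps)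
  moreover have "2 * (t - 1)\<^sup>2 \<le> (2 + M) * (t - 1)\<^sup>2" using M0 by (intro mult_right_mono) auto
  moreover have "0 \<le> s ^ 4" by simp
  ultimately show ?thesis by linarith
next
  case False
  then have t1: "1 \<le> t" by simp
  have "ln t \<le> (t\<^sup>2 - 1) / (2 * t)"
    using ln_le_half_diff_inverse[OF t1] t by (simp add: field_simps power2_eq_square)
  then have "2 * ln t * (2 * t - 1) \<le> (t\<^sup>2 - 1) / t * (2 * t - 1)"
    using t1 by (intro mult_right_mono) (auto simp: field_simps)
  also have "\<dots> = (t - 1) * (3 * t - 1) - (t - 1) ^ 3 / t"
    using t by (simp add: field_simps power2_eq_square power3_eq_cube)
  also have "\<dots> \<le> (t - 1) * (3 * t - 1)" using t t1 by simp
  finally have a: "2 * ln t * (2 * t - 1) \<le> (t - 1) * (3 * t - 1)" .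
  have b: "(2 + 2 * ln t) * (t - 1)\<^sup>2 \<le> (2 + M) * (t - 1)\<^sup>2" using M by (intro mult_right_mono) auto
  have "2 * t\<^sup>2 * ln t - t\<^sup>2 + 1
      = (2 + 2 * ln t) * (t - 1)\<^sup>2 + (2 * ln t * (2 * t - 1) - (t - 1) * (3 * t - 1))"
    by (simp add: power2_eq_square algebra_simps)
  then show ?thesis using a b by linarith
qed

lemma relative_entropy_term_le:
  fixes p q M :: real
  assumes p: "0 \<le> p" and q: "0 \<le> q" and M: "0 \<le> M"
    and ratio: "0 < p \<Longrightarrow> 0 < q \<and> ln (p / q) \<le> M"
  shows "p * (ln p - ln q) - p + q \<le> (2 + M) * (sqrt p - sqrt q)\<^sup>2"
proof (cases "p = 0")
  case True
  then show ?thesis using q M by (simp add: mult_le_cancel_right1)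
next
  case False
  then have p0: "0 < p" using p by simp
  with ratio have q0: "0 < q" and lM: "ln (p / q) \<le> M" by auto
  define t where "t = sqrt p / sqrt q"
  have t: "0 < t" using p0 q0 by (simp add: t_def)
  have pt: "p = t\<^sup>2 * q" using p0 q0 by (simp add: t_def power_divide)
  have lpq: "ln p - ln q = 2 * ln t" using p0 q0 by (simp add: t_def ln_div ln_sqrt)
  then have "2 * t\<^sup>2 * ln t - t\<^sup>2 + 1 \<le> (2 + M) * (t - 1)\<^sup>2"
    using ln_sq_ratio_bound[OF t _ M] lM p0 q0 by (simp add: ln_div)
  then have "q * (2 * t\<^sup>2 * ln t - t\<^sup>2 + 1) \<le> q * ((2 + M) * (t - 1)\<^sup>2)"
    using q by (intro mult_left_mono)
  moreover have "q * (2 * t\<^sup>2 * ln t - t\<^sup>2 + 1) = p * (ln p - ln q) - p + q"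
    unfolding lpq by (simp add: pt algebra_simps)
  moreover have "q * ((2 + M) * (t - 1)\<^sup>2) = (2 + M) * (sqrt p - sqrt q)\<^sup>2"
    using q0 by (simp add: t_def power2_eq_square field_simps)
  ultimately show ?thesis by simp
qed

section \<open>The classical inequality for a doubly stochastic coupling\<close>

lemma doubly_stochastic_sum_diff:
  assumes "doubly_stochastic n c" and "(\<Sum>i<n. p i) = (\<Sum>j<n. q j)"
  shows "(\<Sum>i<n. \<Sum>j<n. c i j * (q j - p i)) = 0"
  using assms by (simp add: right_diff_distrib sum_subtractf doubly_stochastic_sum_left
      doubly_stochastic_sum_right)

lemma doubly_stochastic_ex_ge:
  assumes ds: "doubly_stochastic n c" and q: "\<And>j. j < n \<Longrightarrow> 0 \<le> q j"
    and sums: "(\<Sum>i<n. p i) = (\<Sum>j<n. q j)" and nz: "(\<Sum>i<n. p i) \<noteq> 0"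
  shows "\<exists>i<n. \<exists>j<n. p i * c i j \<noteq> 0 \<and> q j \<le> p i"
proof (rule ccontr)
  assume "\<not> ?thesis"
  then have lt: "p i < q j" if "i < n" "j < n" "p i * c i j \<noteq> 0" for i j
    using that by force
  have c0: "0 \<le> c i j" if "i < n" "j < n" for i j
    using ds that by (simp add: doubly_stochastic_def)
  have term_nonneg: "0 \<le> c i j * (q j - p i)" if ij: "i < n" "j < n" for i j
  proof (cases "p i * c i j = 0")
    case True
    then show ?thesis using c0[OF ij] q[OF ij(2)] by auto
  next
    case False
    then show ?thesis using c0[OF ij] lt[OF ij False] by simp
  qed
  have "(\<Sum>i<n. \<Sum>j<n. c i j * p i) \<noteq> 0" using doubly_stochastic_sum_left[OF ds] nz by simp
  then obtain i j where ij: "i < n" "j < n" and "c i j * p i \<noteq> 0"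
    by (metis (no_types, lifting) lessThan_iff sum.neutral)
  then have "0 < c i j * (q j - p i)" using c0[OF ij] lt[OF ij] by (simp add: mult.commute)
  also have "\<dots> \<le> (\<Sum>j<n. c i j * (q j - p i))"
    using ij term_nonneg by (intro member_le_sum) auto
  also have "\<dots> \<le> (\<Sum>i<n. \<Sum>j<n. c i j * (q j - p i))"
    using ij term_nonneg by (intro member_le_sum sum_nonneg) auto
  also have "\<dots> = 0" by (rule doubly_stochastic_sum_diff[OF ds sums])
  finally show False by simp
qed

lemma sum_relative_entropy_le_hellinger:
  fixes c :: "nat \<Rightarrow> nat \<Rightarrow> real" and p q :: "nat \<Rightarrow> real"
  assumes ds: "doubly_stochastic n c" and p: "\<And>i. i < n \<Longrightarrow> 0 \<le> p i" and q: "\<And>j. j < n \<Longrightarrow> 0 \<le> q j"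
    and sums: "(\<Sum>i<n. p i) = (\<Sum>j<n. q j)" and M: "0 \<le> M"
    and ratio: "\<And>i j. i < n \<Longrightarrow> j < n \<Longrightarrow> p i * c i j \<noteq> 0 \<Longrightarrow> q j \<noteq> 0 \<and> ln (p i / q j) \<le> M"
  shows "(\<Sum>i<n. \<Sum>j<n. c i j * (p i * (ln (p i) - ln (q j))))
    \<le> (2 + M) * (\<Sum>i<n. \<Sum>j<n. c i j * (sqrt (p i) - sqrt (q j))\<^sup>2)"
proof -
  have "(\<Sum>i<n. \<Sum>j<n. c i j * (p i * (ln (p i) - ln (q j))))
      = (\<Sum>i<n. \<Sum>j<n. c i j * (p i * (ln (p i) - ln (q j)))) + (\<Sum>i<n. \<Sum>j<n. c i j * (q j - p i))"
    using doubly_stochastic_sum_diff[OF ds sums] by simp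
  also have "\<dots> = (\<Sum>i<n. \<Sum>j<n. c i j * (p i * (ln (p i) - ln (q j)) - p i + q j))"
    by (simp add: sum.distrib[symmetric] algebra_simps)
  also have "\<dots> \<le> (\<Sum>i<n. \<Sum>j<n. (2 + M) * (c i j * (sqrt (p i) - sqrt (q j))\<^sup>2))"
  proof (intro sum_mono)
    fix i j assume "i \<in> {..<n}" "j \<in> {..<n}"
    then have i: "i < n" and j: "j < n" by auto
    have c: "0 \<le> c i j" using ds i j by (simp add: doubly_stochastic_def)
    show "c i j * (p i * (ln (p i) - ln (q j)) - p i + q j) \<le> (2 + M) * (c i j * (sqrt (p i) - sqrt (q j))\<^sup>2)"
    proof (cases "c i j = 0")
      case False
      then have "p i * (ln (p i) - ln (q j)) - p i + q j \<le> (2 + M) * (sqrt (p i) - sqrt (q j))\<^sup>2"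
        using p[OF i] q[OF j] M ratio[OF i j] by (intro relative_entropy_term_le) (auto simp: less_le)
      then show ?thesis using c by (simp add: mult.left_commute mult_left_mono)
    qed simp
  qed
  also have "\<dots> = (2 + M) * (\<Sum>i<n. \<Sum>j<n. c i j * (sqrt (p i) - sqrt (q j))\<^sup>2)"
    by (simp add: sum_distrib_left)
  finally show ?thesis .
qed

text \<open>The classical counterpart of D_infinity for the coupling c.\<close>

definition max_log_ratio :: "nat \<Rightarrow> (nat \<Rightarrow> nat \<Rightarrow> real) \<Rightarrow> (nat \<Rightarrow> real) \<Rightarrow> (nat \<Rightarrow> real) \<Rightarrow> ereal" where
  "max_log_ratio n c p q = (let S = {(i,j). i < n \<and> j < n \<and> p i * c i j \<noteq> 0} in
     if \<exists>(i,j)\<in>S. q j = 0 then \<infinity> else Max ((\<lambda>(i,j). ereal (ln (p i / q j))) ` S))"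

lemma max_log_ratio_infinite:
  "i < n \<Longrightarrow> j < n \<Longrightarrow> p i * c i j \<noteq> 0 \<Longrightarrow> q j = 0 \<Longrightarrow> max_log_ratio n c p q = \<infinity>"
  unfolding max_log_ratio_def Let_def by auto

lemma max_log_ratio_finite:
  assumes ds: "doubly_stochastic n c" and q: "\<And>j. j < n \<Longrightarrow> 0 \<le> q j"
    and sums: "(\<Sum>i<n. p i) = (\<Sum>j<n. q j)" and nz: "(\<Sum>i<n. p i) \<noteq> 0"
    and supp: "\<And>i j. i < n \<Longrightarrow> j < n \<Longrightarrow> p i * c i j \<noteq> 0 \<Longrightarrow> q j \<noteq> 0"
  obtains M where "max_log_ratio n c p q = ereal M" and "0 \<le> M"
    and "\<And>i j. i < n \<Longrightarrow> j < n \<Longrightarrow> p i * c i j \<noteq> 0 \<Longrightarrow> ln (p i / q j) \<le> M"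
proof -
  define S where "S = {(i,j). i < n \<and> j < n \<and> p i * c i j \<noteq> 0}"
  define f where "f = (\<lambda>(i,j). ereal (ln (p i / q j)))"
  have Max: "max_log_ratio n c p q = Max (f ` S)"
    using supp by (auto simp: max_log_ratio_def S_def f_def)
  have fin: "finite S" by (rule finite_subset[of _ "{..<n} \<times> {..<n}"]) (auto simp: S_def)
  obtain i1 j1 where ij1: "(i1,j1) \<in> S" and le: "q j1 \<le> p i1"
    using doubly_stochastic_ex_ge[OF ds q sums nz] by (auto simp: S_def)
  have "Max (f ` S) \<in> f ` S" using fin ij1 by (intro Max_in) auto
  then obtain i0 j0 where M: "Max (f ` S) = ereal (ln (p i0 / q j0))" by (auto simp: f_def)
  have bound: "ln (p i / q j) \<le> ln (p i0 / q j0)" if "(i,j) \<in> S" for i j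
  proof -
    have "f (i,j) \<le> Max (f ` S)" using fin that by (intro Max_ge) auto
    then have "f (i,j) \<le> ereal (ln (p i0 / q j0))" by (simp only: M)
    then show ?thesis by (simp add: f_def)
  qed
  have j1: "j1 < n" and "q j1 \<noteq> 0" using ij1 supp by (auto simp: S_def)
  then have "0 < q j1" using q[OF j1] by simp
  then have "0 \<le> ln (p i1 / q j1)" using le by simp
  then have "0 \<le> ln (p i0 / q j0)" using bound[OF ij1] by simp
  then show thesis using that Max M bound by (auto simp: S_def)
qed

lemma sum_relative_entropy_le_max_log_ratio:
  assumes ds: "doubly_stochastic n c" and p: "\<And>i. i < n \<Longrightarrow> 0 \<le> p i" and q: "\<And>j. j < n \<Longrightarrow> 0 \<le> q j"
    and sums: "(\<Sum>i<n. p i) = (\<Sum>j<n. q j)" and nz: "(\<Sum>i<n. p i) \<noteq> 0"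
    and supp: "\<And>i j. i < n \<Longrightarrow> j < n \<Longrightarrow> p i * c i j \<noteq> 0 \<Longrightarrow> q j \<noteq> 0"
  shows "ereal (\<Sum>i<n. \<Sum>j<n. c i j * (p i * (ln (p i) - ln (q j))))
    \<le> (2 + max_log_ratio n c p q) * ereal (\<Sum>i<n. \<Sum>j<n. c i j * (sqrt (p i) - sqrt (q j))\<^sup>2)"
proof -
  obtain M where M: "max_log_ratio n c p q = ereal M" "0 \<le> M"
    and ratio: "\<And>i j. i < n \<Longrightarrow> j < n \<Longrightarrow> p i * c i j \<noteq> 0 \<Longrightarrow> ln (p i / q j) \<le> M"
    by (rule max_log_ratio_finite[where n = n and c = c and p = p and q = q])
      (use ds q sums nz supp in auto)
  have "(\<Sum>i<n. \<Sum>j<n. c i j * (p i * (ln (p i) - ln (q j))))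
      \<le> (2 + M) * (\<Sum>i<n. \<Sum>j<n. c i j * (sqrt (p i) - sqrt (q j))\<^sup>2)"
    using supp ratio by (intro sum_relative_entropy_le_hellinger[OF ds p q sums M(2)]) auto
  then show ?thesis by (simp add: M(1))
qed

lemma doubly_stochastic_sum_sq_pos:
  assumes ds: "doubly_stochastic n c" and ij: "i < n" "j < n" and "c i j \<noteq> 0" and "x i \<noteq> y j"
  shows "0 < (\<Sum>i<n. \<Sum>j<n. c i j * (x i - y j)\<^sup>2)"
proof -
  have nonneg: "0 \<le> c i' j' * (x i' - y j')\<^sup>2" if "i' < n" "j' < n" for i' j'
    using ds that by (simp add: doubly_stochastic_def)
  have "0 < c i j * (x i - y j)\<^sup>2"
    using nonneg[OF ij] assms(4,5) by (simp add: order_le_less)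
  then show ?thesis using ij nonneg
    by (intro sum_pos2[of "{..<n}" i] sum_nonneg sum_pos2[of "{..<n}" j]) auto
qed

section \<open>The divergences in terms of eigenvalues and overlaps\<close>

lemma psd_spec_dec_nonneg:
  assumes A: "psd_mat n A" and d: "spec_dec n A U l" and i: "i < n"
  shows "0 \<le> l i"
proof -
  have U: "unitary_mat n U" and Adec: "A = U * rdiag n l * cadj U" using d by (auto simp: spec_dec_def)
  have Uc: "U \<in> carrier_mat n n" using U by (rule unitary_carrier_mat)
  have Ac: "A \<in> carrier_mat n n" using d by (rule spec_dec_carrier_mat)
  define v where "v = col U i"
  have v: "v \<in> carrier_vec n" using Uc unfolding v_def by (metis carrier_matD(1) carrier_vec_dim_vec dim_col)
  have "A * U = U * rdiag n l * (cadj U * U)"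
    using Uc by (simp add: Adec assoc_mult_mat[of _ n n _ n _ n] mult_carrier_mat[of _ n n _ n])
  then have "A * U = U * rdiag n l" using U Uc by (simp add: unitary_mat_def)
  then have "complex_of_real (l i) = (cadj U * (A * U)) $$ (i,i)"
    using unitary_cancel_left[OF U, of "rdiag n l" n] i by simp
  also have "\<dots> = (\<Sum>k<n. cadj U $$ (i,k) * (A * U) $$ (k,i))"
    using Uc Ac i by (intro index_mult_mat_sum) auto
  also have "\<dots> = (\<Sum>k<n. cnj (v $ k) * (A *\<^sub>v v) $ k)"
    using Uc Ac i by (intro sum.cong) (auto simp: v_def)
  finally have "complex_of_real (l i) = (\<Sum>k<n. cnj (v $ k) * (A *\<^sub>v v) $ k)" .
  moreover have "0 \<le> Re (\<Sum>k<n. cnj (v $ k) * (A *\<^sub>v v) $ k)"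
    using A v unfolding psd_mat_def by blast
  ultimately show ?thesis by (metis Re_complex_of_real)
qed

lemma density_spec_dec:
  assumes A: "density_mat n A" and d: "spec_dec n A U l"
  shows "\<And>i. i < n \<Longrightarrow> 0 \<le> l i" and "(\<Sum>i<n. l i) = 1"
proof -
  show "\<And>i. i < n \<Longrightarrow> 0 \<le> l i" using A d psd_spec_dec_nonneg by (auto simp: density_mat_def)
  have "complex_of_real (\<Sum>i<n. l i) = 1"
    using A mtrace_spec_dec[OF d] by (simp add: density_mat_def del: of_real_sum)
  then show "(\<Sum>i<n. l i) = 1" by (simp only: of_real_eq_1_iff)
qed

lemma D_H2_spec_dec:
  assumes d1: "spec_dec n \<rho> U p" and d2: "spec_dec n \<sigma> V q"
  shows "D_H2 \<rho> \<sigma> = (\<Sum>i<n. \<Sum>j<n. overlap U V i j * (sqrt (p i) - sqrt (q j))\<^sup>2)"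
proof -
  have U: "unitary_mat n U" and V: "unitary_mat n V" using d1 d2 by (auto simp: spec_dec_def)
  show ?thesis
    unfolding D_H2_def mat_fun_spec_dec[OF d1] mat_fun_spec_dec[OF d2]
    using mtrace_spec_dec_diff_square[OF U V, of "sqrt \<circ> p" "sqrt \<circ> q"] by simp
qed

lemma spec_dec_mult_vec:
  assumes d: "spec_dec n A U l" and x: "x \<in> carrier_vec n"
  shows "A *\<^sub>v x = U *\<^sub>v (rdiag n l *\<^sub>v (cadj U *\<^sub>v x))"
proof -
  have Uc: "U \<in> carrier_mat n n" using d by (simp add: spec_dec_def unitary_carrier_mat)
  have "A *\<^sub>v x = (U * rdiag n l) *\<^sub>v (cadj U *\<^sub>v x)"
    using d Uc x assoc_mult_mat_vec[of "U * rdiag n l" n n "cadj U" n x] mult_carrier_mat[of U n n "rdiag n l" n]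
    by (simp add: spec_dec_def)
  also have "\<dots> = U *\<^sub>v (rdiag n l *\<^sub>v (cadj U *\<^sub>v x))"
    using Uc x by (metis assoc_mult_mat_vec cadj_carrier_mat mult_mat_vec_carrier rdiag_carrier_mat(1))
  finally show ?thesis .
qed

lemma mult_mat_zero_vec: "A \<in> carrier_mat n m \<Longrightarrow> A *\<^sub>v 0\<^sub>v m = 0\<^sub>v n"
  by (intro eq_vecI) (auto simp: scalar_prod_def)

text \<open>If sigma v = 0, then V^* v is supported on eigenvectors of sigma with eigenvalue 0, and
  by the hypothesis these are orthogonal to every eigenvector of rho with nonzero eigenvalue.\<close>

lemma spec_dec_kernel_subset:
  assumes d1: "spec_dec n \<rho> U p" and d2: "spec_dec n \<sigma> V q"
    and supp: "\<And>i j. i < n \<Longrightarrow> j < n \<Longrightarrow> q j = 0 \<Longrightarrow> p i * overlap U V i j = 0"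
    and v: "v \<in> carrier_vec n" and \<sigma>v: "\<sigma> *\<^sub>v v = 0\<^sub>v n"
  shows "\<rho> *\<^sub>v v = 0\<^sub>v n"
proof -
  have U: "unitary_mat n U" and V: "unitary_mat n V" using d1 d2 by (auto simp: spec_dec_def)
  have Uc: "U \<in> carrier_mat n n" and Vc: "V \<in> carrier_mat n n" using U V by (auto simp: unitary_carrier_mat)
  define w where "w = cadj V *\<^sub>v v"
  have w: "w \<in> carrier_vec n" using Vc v unfolding w_def by (metis cadj_carrier_mat mult_mat_vec_carrier)
  have "rdiag n q *\<^sub>v w \<in> carrier_vec n" using w by (metis mult_mat_vec_carrier rdiag_carrier_mat(1))
  then have "rdiag n q *\<^sub>v w = cadj V *\<^sub>v (\<sigma> *\<^sub>v v)"
    using spec_dec_mult_vec[OF d2 v] unitary_mult_vec_cancel[OF V] by (simp add: w_def)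
  then have "rdiag n q *\<^sub>v w = 0\<^sub>v n" using \<sigma>v Vc by (simp add: mult_mat_zero_vec)
  then have qw: "q k = 0" if "k < n" "w $ k \<noteq> 0" for k
    using that index_rdiag_mult_vec[OF w, of k q] by (metis index_zero_vec(1) mult_eq_0_iff of_real_eq_0_iff)
  define W where "W = cadj U * V"
  have Wc: "W \<in> carrier_mat n n" using Uc Vc unfolding W_def by (metis cadj_carrier_mat mult_carrier_mat)
  have "v = V *\<^sub>v w"
    using unitary_mult_vec_cancel[OF unitary_cadj[OF V] v] by (simp add: w_def)
  then have Uv: "cadj U *\<^sub>v v = W *\<^sub>v w"
    using assoc_mult_mat_vec[of "cadj U" n n V n w] Uc Vc w by (simp add: W_def)
  have "rdiag n p *\<^sub>v (W *\<^sub>v w) = 0\<^sub>v n"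
  proof (rule eq_vecI)
    fix i assume "i < dim_vec (0\<^sub>v n :: complex vec)"
    then have i: "i < n" by simp
    have "W *\<^sub>v w \<in> carrier_vec n" using Wc w by (metis mult_mat_vec_carrier)
    then have "(rdiag n p *\<^sub>v (W *\<^sub>v w)) $ i = complex_of_real (p i) * (W *\<^sub>v w) $ i"
      using i by (rule index_rdiag_mult_vec)
    also have "\<dots> = (\<Sum>k<n. complex_of_real (p i) * W $$ (i,k) * w $ k)"
      using Wc w i by (simp add: scalar_prod_def lessThan_atLeast0 sum_distrib_left mult.assoc)
    also have "\<dots> = 0"
    proof (intro sum.neutral ballI)
      fix k assume k: "k \<in> {..<n}"
      show "complex_of_real (p i) * W $$ (i,k) * w $ k = 0"
      proof (cases "w $ k = 0")
        case False
        then have "p i * (cmod (W $$ (i,k)))\<^sup>2 = 0" using supp[of i k] qw[of k] i k by (simp add: overlap_def W_def)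
        then show ?thesis by simp
      qed simp
    qed
    finally show "(rdiag n p *\<^sub>v (W *\<^sub>v w)) $ i = 0\<^sub>v n $ i" using i by simp
  qed simp
  then show ?thesis using spec_dec_mult_vec[OF d1 v] Uv Uc by (simp add: mult_mat_zero_vec)
qed

lemma D_KL_spec_dec:
  assumes d1: "spec_dec n \<rho> U p" and d2: "spec_dec n \<sigma> V q"
    and supp: "\<And>i j. i < n \<Longrightarrow> j < n \<Longrightarrow> q j = 0 \<Longrightarrow> p i * overlap U V i j = 0"
  shows "D_KL \<rho> \<sigma> = ereal (\<Sum>i<n. \<Sum>j<n. overlap U V i j * (p i * (ln (p i) - ln (q j))))"
proof -
  have U: "unitary_mat n U" and V: "unitary_mat n V" using d1 d2 by (auto simp: spec_dec_def)
  have dims: "dim_row \<rho> = n" "dim_row \<sigma> = n"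
    using spec_dec_carrier_mat[OF d1] spec_dec_carrier_mat[OF d2] by auto
  have "\<forall>v \<in> carrier_vec n. \<sigma> *\<^sub>v v = 0\<^sub>v n \<longrightarrow> \<rho> *\<^sub>v v = 0\<^sub>v n"
    using spec_dec_kernel_subset[OF d1 d2 supp] by blast
  then have "\<forall>v \<in> carrier_vec (dim_row \<sigma>). \<sigma> *\<^sub>v v = 0\<^sub>v (dim_row \<sigma>) \<longrightarrow> \<rho> *\<^sub>v v = 0\<^sub>v (dim_row \<rho>)"
    unfolding dims .
  moreover have "mtrace (\<rho> * (mat_fun ln \<rho> - mat_fun ln \<sigma>))
      = complex_of_real (\<Sum>i<n. \<Sum>j<n. overlap U V i j * (p i * (ln (p i) - ln (q j))))"
    unfolding mat_fun_spec_dec[OF d1] mat_fun_spec_dec[OF d2]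
    using d1 mtrace_spec_dec_mult_diff[OF U V, of p "ln \<circ> p" "ln \<circ> q"] by (simp add: spec_dec_def)
  ultimately show ?thesis unfolding D_KL_def by simp
qed

lemma D_inf_spec_dec:
  assumes "hermitian_mat n \<rho>" and "hermitian_mat n \<sigma>"
  obtains U p V q where "spec_dec n \<rho> U p" "spec_dec n \<sigma> V q" "D_inf \<rho> \<sigma> = D_inf_dec n U p V q"
proof -
  let ?P = "\<lambda>r. \<exists>U p V q. spec_dec n \<rho> U p \<and> spec_dec n \<sigma> V q \<and> r = D_inf_dec n U p V q"
  have "dim_row \<rho> = n" using assms(1) unfolding hermitian_mat_def carrier_mat_def by simp
  then have "D_inf \<rho> \<sigma> = (SOME r. ?P r)" by (simp add: D_inf_def)
  moreover have "\<exists>r. ?P r"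
    using hermitian_spec_dec_exists[OF assms(1)] hermitian_spec_dec_exists[OF assms(2)] by blast
  ultimately have "?P (D_inf \<rho> \<sigma>)" using someI_ex[of ?P] by simp
  then show thesis using that by blast
qed

lemma D_inf_dec_overlap:
  assumes U: "unitary_mat n U" and V: "unitary_mat n V"
  shows "D_inf_dec n U p V q = max_log_ratio n (overlap U V) p q"
proof -
  have Uc: "U \<in> carrier_mat n n" and Vc: "V \<in> carrier_mat n n" using U V by (auto simp: unitary_carrier_mat)
  have "(\<Sum>k<n. cnj (U $$ (k,i)) * V $$ (k,j)) = (cadj U * V) $$ (i,j)" if "i < n" "j < n" for i j
  proof -
    have "(cadj U * V) $$ (i,j) = (\<Sum>k<n. cadj U $$ (i,k) * V $$ (k,j))"
      using Uc Vc that by (intro index_mult_mat_sum) auto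
    then show ?thesis using Uc that by simp
  qed
  then have "{(i,j). i < n \<and> j < n \<and> p i * (cmod (\<Sum>k<n. cnj (U $$ (k,i)) * V $$ (k,j)))\<^sup>2 \<noteq> 0}
      = {(i,j). i < n \<and> j < n \<and> p i * overlap U V i j \<noteq> 0}"
    by (auto simp: overlap_def)
  then show ?thesis unfolding D_inf_dec_def max_log_ratio_def by simp
qed

theorem theorem2p32:
  fixes d :: nat and \<rho> \<sigma> :: "complex mat"
  assumes "density_mat d \<rho>" and "density_mat d \<sigma>"
  shows "D_KL \<rho> \<sigma> \<le> (2 + D_inf \<rho> \<sigma>) * ereal (D_H2 \<rho> \<sigma>)"
proof -
  have "hermitian_mat d \<rho>" "hermitian_mat d \<sigma>"
    using assms by (simp_all add: density_mat_def psd_mat_def)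
  then obtain U p V q where d1: "spec_dec d \<rho> U p" and d2: "spec_dec d \<sigma> V q"
    and "D_inf \<rho> \<sigma> = D_inf_dec d U p V q" by (rule D_inf_spec_dec)
  moreover have U: "unitary_mat d U" and V: "unitary_mat d V" using d1 d2 by (auto simp: spec_dec_def)
  ultimately have Dinf: "D_inf \<rho> \<sigma> = max_log_ratio d (overlap U V) p q" by (simp add: D_inf_dec_overlap)
  note p = density_spec_dec[OF assms(1) d1] and q = density_spec_dec[OF assms(2) d2]
  note ds = doubly_stochastic_overlap[OF U V] and DH = D_H2_spec_dec[OF d1 d2]
  show ?thesis
  proof (cases "\<exists>i<d. \<exists>j<d. p i * overlap U V i j \<noteq> 0 \<and> q j = 0")
    case True
    then obtain i j where ij: "i < d" "j < d" "p i * overlap U V i j \<noteq> 0" "q j = 0" by blast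
    then have "0 < D_H2 \<rho> \<sigma>"
      unfolding DH by (intro doubly_stochastic_sum_sq_pos[OF ds, of i j "\<lambda>i. sqrt (p i)"]) auto
    moreover have "D_inf \<rho> \<sigma> = \<infinity>" using ij by (simp add: Dinf max_log_ratio_infinite)
    ultimately show ?thesis by simp
  next
    case False
    then have "D_KL \<rho> \<sigma> = ereal (\<Sum>i<d. \<Sum>j<d. overlap U V i j * (p i * (ln (p i) - ln (q j))))"
      by (intro D_KL_spec_dec[OF d1 d2]) auto
    also have "\<dots> \<le> (2 + D_inf \<rho> \<sigma>) * ereal (D_H2 \<rho> \<sigma>)"
      unfolding Dinf DH using p q False by (intro sum_relative_entropy_le_max_log_ratio[OF ds]) auto
    finally show ?thesis .
  qed
qed

end
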